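(* Let $a\in\{1,2\}$ and let $K=\partial_a^{-1}+\sum_{j\ge1}\partial_{3-a}^{-j}V_j$, with $V_j\in\mathcal B((\partial_a^{-1}))$, be the operator satisfying $HK=\partial_{3-a}$ (i.e. $K=\iota_{\partial_{3-a}^{-1}}H^{-1}\partial_{3-a}$). Then for every $k\ge1$, $$\pi_a(\partial_{3-a}^k)=(\partial_{3-a}^k K)_{3-a,[0]}\,\partial_a=\sum_{j=1}^k\partial_{3-a}^{k-j}(V_j)\,\partial_a,$$ where $\partial_{3-a}^{k-j}(V_j)$ denotes $V_j$ with each coefficient differentiated $k-j$ times with respect to $x_{3-a}$, and $(\cdot)_{3-a,[0]}$ is the coefficient of $\partial_{3-a}^0$ after writing the operator in normal order (all $\partial_{3-a}$ to the right of coefficients and $\partial_a$-powers).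
   Context: $\mathcal B$ is an algebra of functions of $\mathbf t$ (including $x_1,x_2$), $\partial_a=\partial/\partial x_a$, $\rho\in\mathcal B$, $H=\partial_1\partial_2+\rho$. $\mathcal E_{(a)}=\mathcal B[\partial_{3-a}]((\partial_a^{-1}))$ (operators $\sum_{i\le M}\sum_{0\le j\le N}b_{ij}\partial_a^i\partial_{3-a}^j$, commuting $\partial_1,\partial_2$, Leibniz composition), $\mathcal E^0_{(a)}=\mathcal B((\partial_a^{-1}))$; $\mathcal E_{(a)}=\mathcal E^0_{(a)}\oplus\mathcal E_{(a)}H$ and $\pi_a$ is the projection onto $\mathcal E^0_{(a)}$ along $\mathcal E_{(a)}H$. The operator $K$ lives in the ring of formal series $\sum_{j\le N}\partial_{3-a}^jP_j$, $P_j\in\mathcal B((\partial_a^{-1}))$; the equation $HK=\partial_{3-a}$ determines the $V_j$ recursively, e.g. for $a=1$: $V_1=-\partial_1^{-1}\rho\partial_1^{-1}$, $V_{j+1}=-\sum_{l=0}^{j-1}\binom{j-1}{l}\partial_1^{-1}\partial_2^l(\rho)V_{j-l}$. *)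

theory Defs
  imports Main "HOL-Library.Groups_Big_Fun"
begin

text \<open>
  The algebra B is modelled as a commutative ring 'b carrying two
  commuting derivations d1 = d/dx_1 and d2 = d/dx_2.
  For a in {1,2}, an operator sum c(i,j) * D_a^i * D_(3-a)^j (i, j integers,
  coefficients written to the LEFT of all derivative powers: the normal order)
  is represented by its coefficient function c :: int => int => 'b.
  Such formal sums need not have finite support (e.g. K).
\<close>

type_synonym 'b opr = "int \<Rightarrow> int \<Rightarrow> 'b"

definition is_derivation :: "('b::comm_ring_1 \<Rightarrow> 'b) \<Rightarrow> bool" where
  "is_derivation d \<longleftrightarrow> (\<forall>x y. d (x + y) = d x + d y) \<and> (\<forall>x y. d (x * y) = d x * y + x * d y)"

definition ibinom :: "int \<Rightarrow> nat \<Rightarrow> int" where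
  "ibinom i m = (if 0 \<le> i then int (nat i choose m)
                 else (-1) ^ m * int ((nat (- i) + m - 1) choose m))"

definition dA :: "nat \<Rightarrow> ('b \<Rightarrow> 'b) \<Rightarrow> ('b \<Rightarrow> 'b) \<Rightarrow> 'b \<Rightarrow> 'b" where
  "dA a d1 d2 = (if a = 1 then d1 else d2)"

definition dB :: "nat \<Rightarrow> ('b \<Rightarrow> 'b) \<Rightarrow> ('b \<Rightarrow> 'b) \<Rightarrow> 'b \<Rightarrow> 'b" where
  "dB a d1 d2 = (if a = 1 then d2 else d1)"

text \<open>Composition by the Leibniz rule:
  D_a^i D_b^j y = sum_{m,l} binom(i,m) binom(j,l) (d_a^m d_b^l y) D_a^(i-m) D_b^(j-l).
  The sum is finite in every case in which the composition is defined
  (products inside E_(a), and left multiplication of arbitrary formal sums by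
  differential operators / by D_b^(-j) applied to elements of B((D_a^-1))).\<close>
definition opmul :: "nat \<Rightarrow> ('b::comm_ring_1 \<Rightarrow> 'b) \<Rightarrow> ('b \<Rightarrow> 'b) \<Rightarrow> 'b opr \<Rightarrow> 'b opr \<Rightarrow> 'b opr" where
  "opmul a d1 d2 X Y = (\<lambda>p q. Sum_any (\<lambda>(i::int, j::int, m::nat, l::nat).
      X i j * of_int (ibinom i m) * of_int (ibinom j l) *
      (dA a d1 d2 ^^ m) ((dB a d1 d2 ^^ l) (Y (p - i + int m) (q - j + int l)))))"

definition mono :: "int \<Rightarrow> int \<Rightarrow> 'b::comm_ring_1 opr" where
  "mono i j = (\<lambda>p q. if p = i \<and> q = j then 1 else 0)"

definition opadd :: "'b::comm_ring_1 opr \<Rightarrow> 'b opr \<Rightarrow> 'b opr" where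
  "opadd X Y = (\<lambda>p q. X p q + Y p q)"

definition opsub :: "'b::comm_ring_1 opr \<Rightarrow> 'b opr \<Rightarrow> 'b opr" where
  "opsub X Y = (\<lambda>p q. X p q - Y p q)"

definition Hop :: "'b::comm_ring_1 \<Rightarrow> 'b opr" where
  "Hop \<rho> = opadd (mono 1 1) (\<lambda>p q. if p = 0 \<and> q = 0 then \<rho> else 0)"

text \<open>E_(a) = B[D_(3-a)]((D_a^-1)).\<close>
definition Eset :: "'b::comm_ring_1 opr set" where
  "Eset = {c. \<exists>M N. \<forall>i j. c i j \<noteq> 0 \<longrightarrow> i \<le> M \<and> 0 \<le> j \<and> j \<le> N}"

text \<open>E^0_(a) = B((D_a^-1)).\<close>
definition E0set :: "'b::comm_ring_1 opr set" where
  "E0set = {c \<in> Eset. \<forall>i j. j \<noteq> 0 \<longrightarrow> c i j = 0}"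

definition proj :: "nat \<Rightarrow> ('b::comm_ring_1 \<Rightarrow> 'b) \<Rightarrow> ('b \<Rightarrow> 'b) \<Rightarrow> 'b \<Rightarrow> 'b opr \<Rightarrow> 'b opr" where
  "proj a d1 d2 \<rho> X = (THE Y. Y \<in> E0set \<and> (\<exists>Z \<in> Eset. opsub X Y = opmul a d1 d2 Z (Hop \<rho>)))"

definition Kop :: "nat \<Rightarrow> ('b::comm_ring_1 \<Rightarrow> 'b) \<Rightarrow> ('b \<Rightarrow> 'b) \<Rightarrow> (nat \<Rightarrow> 'b opr) \<Rightarrow> 'b opr" where
  "Kop a d1 d2 V = (\<lambda>p q. mono (-1) 0 p q +
      Sum_any (\<lambda>j::nat. if 1 \<le> j then opmul a d1 d2 (mono 0 (- int j)) (V j) p q else 0))"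

definition coef0 :: "'b::comm_ring_1 opr \<Rightarrow> 'b opr" where
  "coef0 X = (\<lambda>p q. if q = 0 then X p 0 else 0)"

definition dcoef :: "nat \<Rightarrow> ('b::comm_ring_1 \<Rightarrow> 'b) \<Rightarrow> ('b \<Rightarrow> 'b) \<Rightarrow> nat \<Rightarrow> 'b opr \<Rightarrow> 'b opr" where
  "dcoef a d1 d2 n V = (\<lambda>p q. (dB a d1 d2 ^^ n) (V p q))"

end

theory Submission
  imports Defs "HOL-Computational_Algebra.Formal_Power_Series"
begin

text \<open>
  Write \<open>D\<close>, \<open>E\<close> for the derivations along \<open>x\<^sub>a\<close>, \<open>x\<^sub>3\<^sub>-\<^sub>a\<close> and \<open>H\<^sup>-\<^sup>1 = K E\<^sup>-\<^sup>1\<close>.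
  Comparing coefficients in \<open>H K = E\<close> expresses each \<open>E\<close>-column of \<open>K\<close> through the next
  higher one, \<open>K\<^sub>q\<^sub>-\<^sub>1 = - E(K\<^sub>q) - D\<^sup>-\<^sup>1 \<rho> K\<^sub>q\<close>, and descending induction along this recursion
  shows that \<open>H\<^sup>-\<^sup>1\<close> is also a left inverse, \<open>H\<^sup>-\<^sup>1 H = 1\<close>. Hence \<open>L = E\<^sup>k H\<^sup>-\<^sup>1\<close> satisfies
  \<open>L H = E\<^sup>k\<close>. Splitting \<open>L = Z + T\<close> into the part \<open>Z \<in> E\<^sub>(\<^sub>a\<^sub>)\<close> of nonnegative \<open>E\<close>-degree and
  the rest, in nonnegative \<open>E\<close>-degree \<open>T H\<close> only contributes \<open>T\<^sub>-\<^sub>1 D = (E\<^sup>k K)\<^sub>[\<^sub>0\<^sub>] D\<close>, so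
  \<open>E\<^sup>k - (E\<^sup>k K)\<^sub>[\<^sub>0\<^sub>] D = Z H\<close>. This decomposition is unique because the top \<open>E\<close>-column of
  \<open>Z H\<close> is a shift of the top \<open>E\<close>-column of \<open>Z\<close>; hence \<open>\<pi>\<^sub>a(E\<^sup>k) = (E\<^sup>k K)\<^sub>[\<^sub>0\<^sub>] D\<close>.
  Finally \<open>(E\<^sup>k K)\<^sub>[\<^sub>0\<^sub>] = \<Sum>\<^sub>l binom(k,l) E\<^sup>l(K\<^sub>l\<^sub>-\<^sub>k)\<close> is evaluated by Vandermonde's identity.

  Products of formal series exist here only coefficientwise, with no general associativity,
  so the instances needed, such as \<open>(E X) H = E (X H)\<close>, are proved by direct computation.
\<close>

section \<open>Generalised binomial coefficients\<close>

lemma of_int_ibinom: "(of_int (ibinom i m) :: 'a::field_char_0) = of_int i gchoose m"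
proof (cases "0 \<le> i")
  case True
  then obtain n where "i = int n" by (metis nonneg_eq_int)
  then show ?thesis by (simp add: ibinom_def binomial_gbinomial)
next
  case False
  define n where "n = nat (- i)"
  have n: "i = - int n" "n \<ge> 1" using False by (auto simp: n_def)
  have "(of_int i :: 'a) gchoose m = (-1)^m * ((of_nat n + of_nat m - 1) gchoose m)"
    using n by (simp add: gbinomial_minus)
  also have "(of_nat n + of_nat m - 1 :: 'a) = of_nat (n + m - 1)" using n by simp
  finally show ?thesis using n False by (simp add: ibinom_def binomial_gbinomial)
qed

lemma ibinom_Suc_Suc: "ibinom (i + 1) (Suc m) = ibinom i m + ibinom i (Suc m)"
proof -
  have "(of_int (ibinom (i + 1) (Suc m)) :: rat) = of_int (ibinom i m + ibinom i (Suc m))"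
    by (simp add: of_int_ibinom gbinomial_Suc_Suc)
  then show ?thesis by (simp only: of_int_eq_iff)
qed

lemma ibinom_Vandermonde:
  "(\<Sum>l\<le>n. int (k choose l) * ibinom i (n - l)) = ibinom (int k + i) n"
proof -
  have "(of_int (\<Sum>l\<le>n. int (k choose l) * ibinom i (n - l)) :: rat)
      = (\<Sum>l\<le>n. (of_nat k gchoose l) * (of_int i gchoose (n - l)))"
    by (simp add: of_int_ibinom binomial_gbinomial)
  also have "\<dots> = (of_nat k + of_int i) gchoose n"
    using gbinomial_Vandermonde[of "of_nat k" "of_int i :: rat" n] by (simp add: atLeast0AtMost)
  also have "\<dots> = of_int (ibinom (int k + i) n)" by (simp add: of_int_ibinom)
  finally show ?thesis by (simp only: of_int_eq_iff)
qed

lemma ibinom_0_right [simp]: "ibinom i 0 = 1"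
  by (simp add: ibinom_def)

lemma ibinom_0_left: "ibinom 0 m = (if m = 0 then 1 else 0)"
  by (cases m) (simp_all add: ibinom_def)

lemma ibinom_1_left: "ibinom 1 m = (if m \<le> 1 then 1 else 0)"
  by (cases m) (auto simp: ibinom_def binomial_eq_0)

lemma ibinom_minus_1_left: "ibinom (-1) m = (-1)^m"
  by (simp add: ibinom_def)

lemma ibinom_of_nat: "ibinom (int n) m = int (n choose m)"
  by (simp add: ibinom_def)

lemma ibinom_eq_0: "0 \<le> i \<Longrightarrow> i < int m \<Longrightarrow> ibinom i m = 0"
  by (simp add: ibinom_def)

lemma sum_ibinom_shift:
  "(\<Sum>l<Suc B. of_int (ibinom (s - 1 + int l) l) * (f l :: 'b::comm_ring_1)) =
   (\<Sum>l<Suc B. of_int (ibinom (s + int l) l) * f l) - (\<Sum>l<B. of_int (ibinom (s + int l) l) * f (Suc l))"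
proof (induction B)
  case (Suc B)
  have "ibinom (s + int B + 1) (Suc B) = ibinom (s + int B) B + ibinom (s + int B) (Suc B)"
    by (rule ibinom_Suc_Suc)
  with Suc.IH show ?case by (simp add: algebra_simps)
qed simp

section \<open>Derivations\<close>

context
  fixes d :: "'b::comm_ring_1 \<Rightarrow> 'b"
  assumes der: "is_derivation d"
begin

lemma derivation_add: "d (x + y) = d x + d y"
  using der by (simp add: is_derivation_def)

lemma derivation_mult: "d (x * y) = d x * y + x * d y"
  using der by (simp add: is_derivation_def)

lemma derivation_0: "d 0 = 0"
  using derivation_add[of 0 0] by simp

lemma derivation_1: "d 1 = 0"
  using derivation_mult[of 1 1] by simp

lemma derivation_uminus: "d (- x) = - d x"
  using derivation_add[of x "- x"] derivation_0 by (simp add: add_eq_0_iff2)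

lemma derivation_diff: "d (x - y) = d x - d y"
  using derivation_add[of x "- y"] derivation_uminus[of y] by simp

lemma derivation_of_nat: "d (of_nat n) = 0"
  by (induction n) (simp_all add: derivation_add derivation_0 derivation_1)

lemma derivation_of_int: "d (of_int c) = 0"
proof (cases "0 \<le> c")
  case True
  then have "(of_int c :: 'b) = of_nat (nat c)" by simp
  then show ?thesis by (simp only: derivation_of_nat)
next
  case False
  then have "(of_int c :: 'b) = - of_nat (nat (- c))" by simp
  then show ?thesis by (simp only: derivation_uminus derivation_of_nat) simp
qed

lemma derivation_of_int_mult: "d (of_int c * x) = of_int c * d x"
  by (simp add: derivation_mult derivation_of_int)

lemma derivation_sum: "d (sum f A) = (\<Sum>a\<in>A. d (f a))"
  by (induction A rule: infinite_finite_induct) (simp_all add: derivation_0 derivation_add)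

lemma funpow_derivation_add: "(d^^n) (x + y) = (d^^n) x + (d^^n) y"
  by (induction n) (simp_all add: derivation_add)

lemma funpow_derivation_0: "(d^^n) 0 = 0"
  by (induction n) (simp_all add: derivation_0)

lemma funpow_derivation_1: "n > 0 \<Longrightarrow> (d^^n) 1 = 0"
  by (induction n) (simp_all add: derivation_1 funpow_derivation_0 funpow_Suc_right del: funpow.simps)

lemma funpow_derivation_of_int_mult: "(d^^n) (of_int c * x) = of_int c * (d^^n) x"
  by (induction n) (simp_all add: derivation_of_int_mult)

lemma funpow_derivation_sum: "(d^^n) (sum f A) = (\<Sum>a\<in>A. (d^^n) (f a))"
  by (induction n) (simp_all add: derivation_sum)

end

section \<open>Laurent series in \<open>D\<^sup>-\<^sup>1\<close>\<close>

definition vanishes_above :: "int \<Rightarrow> (int \<Rightarrow> 'b::zero) \<Rightarrow> bool" where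
  "vanishes_above M X \<longleftrightarrow> (\<forall>p>M. X p = 0)"

lemma vanishes_above_mono: "vanishes_above M X \<Longrightarrow> M \<le> M' \<Longrightarrow> vanishes_above M' X"
  by (auto simp: vanishes_above_def)

lemma vanishes_above_add:
  "vanishes_above M X \<Longrightarrow> vanishes_above M Y \<Longrightarrow> vanishes_above M (\<lambda>p. X p + Y p :: 'b::monoid_add)"
  by (auto simp: vanishes_above_def)

lemma vanishes_above_diff:
  "vanishes_above M X \<Longrightarrow> vanishes_above M Y \<Longrightarrow> vanishes_above M (\<lambda>p. X p - Y p :: 'b::ab_group_add)"
  by (auto simp: vanishes_above_def)

lemma vanishes_above_uminus: "vanishes_above M X \<Longrightarrow> vanishes_above M (\<lambda>p. - X p :: 'b::ab_group_add)"
  by (auto simp: vanishes_above_def)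

lemma vanishes_above_mult_left: "vanishes_above M X \<Longrightarrow> vanishes_above M (\<lambda>p. c * X p :: 'b::mult_zero)"
  by (auto simp: vanishes_above_def)

lemma vanishes_above_sum:
  "(\<And>i. i \<in> A \<Longrightarrow> vanishes_above M (X i)) \<Longrightarrow> vanishes_above M (\<lambda>p. \<Sum>i\<in>A. X i p :: 'b::comm_monoid_add)"
  by (auto simp: vanishes_above_def)

lemma Sum_any_lessThan: "(\<And>m::nat. B \<le> m \<Longrightarrow> f m = 0) \<Longrightarrow> Sum_any f = (\<Sum>m<B. f m)"
  by (rule Sum_any.expand_superset) (auto simp: not_le[symmetric])

locale commuting_derivations =
  fixes a :: nat and d1 d2 :: "'b::comm_ring_1 \<Rightarrow> 'b"
  assumes derivation_d1: "is_derivation d1" and derivation_d2: "is_derivation d2"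
    and d1_d2_commute: "\<And>x. d1 (d2 x) = d2 (d1 x)"
begin

abbreviation D :: "'b \<Rightarrow> 'b" where "D \<equiv> dA a d1 d2"
abbreviation E :: "'b \<Rightarrow> 'b" where "E \<equiv> dB a d1 d2"
abbreviation mul :: "'b opr \<Rightarrow> 'b opr \<Rightarrow> 'b opr" where "mul \<equiv> opmul a d1 d2"

lemma derivation_D: "is_derivation D"
  using derivation_d1 derivation_d2 by (simp add: dA_def)

lemma derivation_E: "is_derivation E"
  using derivation_d1 derivation_d2 by (simp add: dB_def)

lemma D_E_commute: "D (E x) = E (D x)"
  by (simp add: dA_def dB_def d1_d2_commute)

lemma E_funpow_D: "E ((D^^m) x) = (D^^m) (E x)"
  by (induction m) (simp_all add: D_E_commute[symmetric])

lemma vanishes_above_E: "vanishes_above M X \<Longrightarrow> vanishes_above M (\<lambda>p. (E^^n) (X p))"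
  by (auto simp: vanishes_above_def funpow_derivation_0[OF derivation_E])

text \<open>For a Laurent series \<open>X = \<Sum>\<^sub>p X p * D\<^sup>p\<close> in \<open>D\<^sup>-\<^sup>1\<close>, the normal orderings of
  \<open>X * r\<close>, \<open>D\<^sup>-\<^sup>1 * X\<close> and \<open>D * X\<close>.\<close>

definition rmult :: "(int \<Rightarrow> 'b) \<Rightarrow> 'b \<Rightarrow> int \<Rightarrow> 'b" where
  "rmult X r p = Sum_any (\<lambda>m::nat. X (p + int m) * of_int (ibinom (p + int m) m) * (D^^m) r)"

definition Dinv_mult :: "(int \<Rightarrow> 'b) \<Rightarrow> int \<Rightarrow> 'b" where
  "Dinv_mult X p = Sum_any (\<lambda>m::nat. (-1)^m * (D^^m) (X (p + 1 + int m)))"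

definition D_mult :: "(int \<Rightarrow> 'b) \<Rightarrow> int \<Rightarrow> 'b" where
  "D_mult X p = X (p - 1) + D (X p)"

lemma rmult_eq_sum: "vanishes_above M X \<Longrightarrow> nat (M - p + 1) \<le> B \<Longrightarrow>
   rmult X r p = (\<Sum>m<B. X (p + int m) * of_int (ibinom (p + int m) m) * (D^^m) r)"
  unfolding rmult_def by (rule Sum_any_lessThan) (auto simp: vanishes_above_def)

lemma Dinv_mult_eq_sum: "vanishes_above M X \<Longrightarrow> nat (M - p) \<le> B \<Longrightarrow>
   Dinv_mult X p = (\<Sum>m<B. (-1)^m * (D^^m) (X (p + 1 + int m)))"
  unfolding Dinv_mult_def
  by (rule Sum_any_lessThan) (auto simp: vanishes_above_def funpow_derivation_0[OF derivation_D])

lemma vanishes_above_rmult: "vanishes_above M X \<Longrightarrow> vanishes_above M (rmult X r)"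
  unfolding vanishes_above_def rmult_def by (auto intro!: Sum_any.neutral)

lemma vanishes_above_Dinv_mult: "vanishes_above M X \<Longrightarrow> vanishes_above (M - 1) (Dinv_mult X)"
  unfolding vanishes_above_def Dinv_mult_def
  by (auto intro!: Sum_any.neutral simp: funpow_derivation_0[OF derivation_D])

lemma vanishes_above_D_mult: "vanishes_above M X \<Longrightarrow> vanishes_above (M + 1) (D_mult X)"
  unfolding vanishes_above_def D_mult_def by (auto simp: derivation_0[OF derivation_D])

lemma rmult_zero: "rmult (\<lambda>_. 0) r p = 0"
  unfolding rmult_def by (auto intro!: Sum_any.neutral)

lemma Dinv_mult_zero: "Dinv_mult (\<lambda>_. 0) p = 0"
  unfolding Dinv_mult_def by (auto intro!: Sum_any.neutral simp: funpow_derivation_0[OF derivation_D])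

lemma rmult_add:
  assumes "vanishes_above M X" "vanishes_above M Y"
  shows "rmult (\<lambda>p. X p + Y p) r p = rmult X r p + rmult Y r p"
  using rmult_eq_sum[OF assms(1) order.refl] rmult_eq_sum[OF assms(2) order.refl]
    rmult_eq_sum[OF vanishes_above_add[OF assms] order.refl]
  by (simp add: sum.distrib algebra_simps)

lemma rmult_diff:
  assumes "vanishes_above M X" "vanishes_above M Y"
  shows "rmult (\<lambda>p. X p - Y p) r p = rmult X r p - rmult Y r p"
  using rmult_eq_sum[OF assms(1) order.refl] rmult_eq_sum[OF assms(2) order.refl]
    rmult_eq_sum[OF vanishes_above_diff[OF assms] order.refl]
  by (simp add: sum_subtractf algebra_simps)

lemma rmult_uminus:
  assumes "vanishes_above M X"
  shows "rmult (\<lambda>p. - X p) r p = - rmult X r p"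
  using rmult_eq_sum[OF assms order.refl] rmult_eq_sum[OF vanishes_above_uminus[OF assms] order.refl]
  by (simp add: sum_negf)

lemma rmult_mult_left:
  assumes "vanishes_above M X"
  shows "rmult (\<lambda>p. c * X p) r p = c * rmult X r p"
  using rmult_eq_sum[OF assms order.refl] rmult_eq_sum[OF vanishes_above_mult_left[OF assms] order.refl]
  by (simp add: sum_distrib_left algebra_simps)

lemma Dinv_mult_add:
  assumes "vanishes_above M X" "vanishes_above M Y"
  shows "Dinv_mult (\<lambda>p. X p + Y p) p = Dinv_mult X p + Dinv_mult Y p"
  using Dinv_mult_eq_sum[OF assms(1) order.refl] Dinv_mult_eq_sum[OF assms(2) order.refl]
    Dinv_mult_eq_sum[OF vanishes_above_add[OF assms] order.refl]
  by (simp add: sum.distrib distrib_left funpow_derivation_add[OF derivation_D])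

lemma Dinv_mult_of_int_mult:
  assumes "vanishes_above M X"
  shows "Dinv_mult (\<lambda>p. of_int c * X p) p = of_int c * Dinv_mult X p"
  using Dinv_mult_eq_sum[OF assms order.refl] Dinv_mult_eq_sum[OF vanishes_above_mult_left[OF assms] order.refl]
  by (simp add: sum_distrib_left funpow_derivation_of_int_mult[OF derivation_D] mult.left_commute)

lemma Dinv_mult_shift: "Dinv_mult (\<lambda>p. X (p - 1)) p = Dinv_mult X (p - 1)"
  unfolding Dinv_mult_def by (rule Sum_any.cong) (simp add: algebra_simps)

lemma D_mult_Dinv_mult:
  assumes X: "vanishes_above M X"
  shows "D_mult (Dinv_mult X) p = X p"
proof -
  define B where "B = nat (M - p + 1)"
  have "Dinv_mult X p = (\<Sum>m<B. (-1)^m * (D^^m) (X (p + 1 + int m)))"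
    by (rule Dinv_mult_eq_sum[OF X]) (simp add: B_def)
  then have "D (Dinv_mult X p) = (\<Sum>m<B. (-1)^m * (D^^Suc m) (X (p + 1 + int m)))"
    using derivation_of_int_mult[OF derivation_D, of "(-1)^_"]
    by (simp add: derivation_sum[OF derivation_D])
  moreover have "Dinv_mult X (p - 1) = (\<Sum>m<Suc B. (-1)^m * (D^^m) (X (p - 1 + 1 + int m)))"
    by (rule Dinv_mult_eq_sum[OF X]) (simp add: B_def)
  then have "Dinv_mult X (p - 1) = X p - (\<Sum>m<B. (-1)^m * (D^^Suc m) (X (p + 1 + int m)))"
    unfolding sum.lessThan_Suc_shift by (simp add: algebra_simps sum_negf)
  ultimately show ?thesis by (simp add: D_mult_def)
qed

lemma D_mult_eq_0_imp:
  assumes Y: "vanishes_above M Y" and D_Y: "\<And>p. D_mult Y p = 0"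
  shows "Y p = 0"
proof -
  have top: "Y (M + 1 - int n) = 0" for n
  proof (induction n)
    case 0
    then show ?case using Y by (simp add: vanishes_above_def)
  next
    case (Suc n)
    have "Y (M + 1 - int n - 1) = 0"
      using D_Y[of "M + 1 - int n"] Suc by (simp add: D_mult_def derivation_0[OF derivation_D])
    then show ?case by (simp add: algebra_simps)
  qed
  show ?thesis
  proof (cases "p > M")
    case True
    then show ?thesis using Y by (simp add: vanishes_above_def)
  next
    case False
    then show ?thesis using top[of "nat (M + 1 - p)"] by simp
  qed
qed

lemma D_mult_rmult:
  assumes Y: "vanishes_above M Y"
  shows "D_mult (rmult Y r) p = rmult (D_mult Y) r p"
proof -
  define B where "B = nat (M - p + 2)"
  define t where "t m = Y (p + int m) * of_int (ibinom (p + int m) m) * (D^^Suc m) r" for m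
  have "rmult Y r (p - 1) = (\<Sum>m<Suc B. Y (p - 1 + int m) * of_int (ibinom (p - 1 + int m) m) * (D^^m) r)"
    by (rule rmult_eq_sum[OF Y]) (simp add: B_def)
  then have r1: "rmult Y r (p - 1) = Y (p - 1) * r
      + (\<Sum>m<B. Y (p + int m) * of_int (ibinom (p + int m) (Suc m)) * (D^^Suc m) r)"
    unfolding sum.lessThan_Suc_shift by (simp add: algebra_simps)
  have "rmult Y r p = (\<Sum>m<Suc B. Y (p + int m) * of_int (ibinom (p + int m) m) * (D^^m) r)"
    by (rule rmult_eq_sum[OF Y]) (simp add: B_def)
  then have "D (rmult Y r p) = (\<Sum>m<Suc B. D (Y (p + int m)) * of_int (ibinom (p + int m) m) * (D^^m) r)
      + (\<Sum>m<Suc B. t m)"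
    unfolding t_def
    by (simp add: derivation_sum[OF derivation_D] derivation_mult[OF derivation_D]
        derivation_of_int[OF derivation_D] algebra_simps sum.distrib del: sum.lessThan_Suc)
  moreover have "t B = 0" unfolding t_def using Y by (simp add: vanishes_above_def B_def)
  ultimately have r2: "D (rmult Y r p) = (\<Sum>m<Suc B. D (Y (p + int m)) * of_int (ibinom (p + int m) m) * (D^^m) r)
      + (\<Sum>m<B. t m)"
    by simp
  have "rmult (D_mult Y) r p = (\<Sum>m<Suc B. D_mult Y (p + int m) * of_int (ibinom (p + int m) m) * (D^^m) r)"
    by (rule rmult_eq_sum[OF vanishes_above_D_mult[OF Y]]) (simp add: B_def)
  also have "\<dots> = (\<Sum>m<Suc B. Y (p + int m - 1) * of_int (ibinom (p + int m) m) * (D^^m) r)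
     + (\<Sum>m<Suc B. D (Y (p + int m)) * of_int (ibinom (p + int m) m) * (D^^m) r)"
    unfolding D_mult_def by (simp add: sum.distrib algebra_simps)
  also have "(\<Sum>m<Suc B. Y (p + int m - 1) * of_int (ibinom (p + int m) m) * (D^^m) r)
     = Y (p - 1) * r + (\<Sum>m<B. Y (p + int m) * of_int (ibinom (p + int m) (Suc m)) * (D^^Suc m) r)
       + (\<Sum>m<B. t m)"
    using ibinom_Suc_Suc[of "p + int _"]
    unfolding sum.lessThan_Suc_shift t_def by (simp add: sum.distrib algebra_simps)
  finally show ?thesis unfolding D_mult_def r1 r2 by (simp add: algebra_simps)
qed

lemma Dinv_mult_rmult:
  assumes W: "vanishes_above M W"
  shows "Dinv_mult (rmult W r) p = rmult (Dinv_mult W) r p"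
proof -
  define Y where "Y p = Dinv_mult (rmult W r) p - rmult (Dinv_mult W) r p" for p
  have "vanishes_above (M - 1) Y"
    unfolding Y_def using W
    by (intro vanishes_above_diff vanishes_above_Dinv_mult vanishes_above_rmult)
  moreover have "D_mult Y q = 0" for q
  proof -
    have "D_mult Y q = D_mult (Dinv_mult (rmult W r)) q - D_mult (rmult (Dinv_mult W) r) q"
      by (simp add: D_mult_def Y_def derivation_diff[OF derivation_D])
    also have "D_mult (rmult (Dinv_mult W) r) q = rmult (D_mult (Dinv_mult W)) r q"
      by (rule D_mult_rmult[OF vanishes_above_Dinv_mult[OF W]])
    also have "D_mult (Dinv_mult W) = W" using D_mult_Dinv_mult[OF W] by auto
    finally show ?thesis
      using D_mult_Dinv_mult[OF vanishes_above_rmult[OF W]] by simp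
  qed
  ultimately have "Y p = 0" by (rule D_mult_eq_0_imp)
  then show ?thesis by (simp add: Y_def)
qed

lemma E_rmult:
  assumes X: "vanishes_above M X"
  shows "E (rmult X r p) = rmult (\<lambda>p. E (X p)) r p + rmult X (E r) p"
  using rmult_eq_sum[OF X order.refl, where r = r] rmult_eq_sum[OF X order.refl, where r = "E r"]
    rmult_eq_sum[OF vanishes_above_E[OF X, of 1] order.refl, where r = r]
  by (simp add: derivation_sum[OF derivation_E] derivation_mult[OF derivation_E]
      derivation_of_int[OF derivation_E] sum.distrib E_funpow_D algebra_simps)

definition column_step :: "'b \<Rightarrow> (int \<Rightarrow> 'b) \<Rightarrow> int \<Rightarrow> 'b" where
  "column_step \<rho> X p = - E (X p) - Dinv_mult (\<lambda>q. \<rho> * X q) p"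

lemma vanishes_above_column_step: "vanishes_above M X \<Longrightarrow> vanishes_above M (column_step \<rho> X)"
  unfolding column_step_def
  by (intro vanishes_above_diff vanishes_above_uminus vanishes_above_E[of _ _ 1, simplified]
      vanishes_above_mono[OF vanishes_above_Dinv_mult[OF vanishes_above_mult_left]]) auto

lemma column_step_zero: "column_step \<rho> (\<lambda>_. 0) p = 0"
  unfolding column_step_def using Dinv_mult_zero by (simp add: derivation_0[OF derivation_E])

lemma column_step_shift: "column_step \<rho> (\<lambda>p. X (p - 1)) p = column_step \<rho> X (p - 1)"
  unfolding column_step_def using Dinv_mult_shift[of "\<lambda>q. \<rho> * X q" p] by simp

lemma column_step_add:
  assumes "vanishes_above M X" "vanishes_above M Y"
  shows "column_step \<rho> (\<lambda>p. X p + Y p) p = column_step \<rho> X p + column_step \<rho> Y p"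
  using Dinv_mult_add[OF vanishes_above_mult_left[OF assms(1)] vanishes_above_mult_left[OF assms(2)], of \<rho> \<rho> p]
  by (simp add: column_step_def distrib_left derivation_add[OF derivation_E])

lemma column_step_of_int_mult:
  assumes "vanishes_above M X"
  shows "column_step \<rho> (\<lambda>p. of_int c * X p) p = of_int c * column_step \<rho> X p"
  using Dinv_mult_of_int_mult[OF vanishes_above_mult_left[OF assms], of c \<rho> p]
  by (simp add: column_step_def derivation_of_int_mult[OF derivation_E] algebra_simps)

lemma column_step_sum:
  assumes "finite A" "\<And>i. i \<in> A \<Longrightarrow> vanishes_above M (X i)"
  shows "column_step \<rho> (\<lambda>p. \<Sum>i\<in>A. X i p) p = (\<Sum>i\<in>A. column_step \<rho> (X i) p)"
  using assms
proof (induction A arbitrary: p rule: finite_induct)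
  case empty
  then show ?case using column_step_zero by simp
next
  case (insert x F)
  then have "column_step \<rho> (\<lambda>p. X x p + (\<Sum>i\<in>F. X i p)) p
      = column_step \<rho> (X x) p + column_step \<rho> (\<lambda>p. \<Sum>i\<in>F. X i p) p"
    by (intro column_step_add vanishes_above_sum) auto
  with insert show ?case by simp
qed

lemma column_step_rmult:
  assumes X: "vanishes_above M X"
  shows "column_step \<rho> (rmult X r) p = rmult (column_step \<rho> X) r p - rmult X (E r) p"
proof -
  have "(\<lambda>q. \<rho> * rmult X r q) = rmult (\<lambda>q. \<rho> * X q) r"
    using rmult_mult_left[OF X] by auto
  moreover have "Dinv_mult (rmult (\<lambda>q. \<rho> * X q) r) p = rmult (Dinv_mult (\<lambda>q. \<rho> * X q)) r p"
    by (rule Dinv_mult_rmult[OF vanishes_above_mult_left[OF X]])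
  moreover have "rmult (column_step \<rho> X) r p
      = - rmult (\<lambda>q. E (X q)) r p - rmult (Dinv_mult (\<lambda>q. \<rho> * X q)) r p"
    using rmult_diff[OF vanishes_above_uminus[OF vanishes_above_E[OF X, of 1]]
        vanishes_above_mono[OF vanishes_above_Dinv_mult[OF vanishes_above_mult_left[OF X]]]]
      rmult_uminus[OF vanishes_above_E[OF X, of 1]]
    by (simp add: column_step_def[abs_def])
  ultimately show ?thesis
    unfolding column_step_def[of \<rho> "rmult X r"] E_rmult[OF X] by simp
qed

end

section \<open>Normal-ordered products\<close>

definition bounded_support :: "int \<Rightarrow> int \<Rightarrow> 'b::zero opr \<Rightarrow> bool" where
  "bounded_support M N Z \<longleftrightarrow> (\<forall>i j. Z i j \<noteq> 0 \<longrightarrow> i \<le> M \<and> j \<le> N)"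

lemma vanishes_above_column:
  "bounded_support M N Z \<Longrightarrow> vanishes_above M (\<lambda>i. Z i j)"
  unfolding bounded_support_def vanishes_above_def by (meson not_le)

lemma Eset_bounded_support: "Z \<in> Eset \<Longrightarrow> \<exists>M N. bounded_support M N Z"
  unfolding Eset_def bounded_support_def by blast

lemma Eset_nonneg: "Z \<in> Eset \<Longrightarrow> Z i j \<noteq> 0 \<Longrightarrow> 0 \<le> j"
  by (auto simp: Eset_def)

definition nonneg_part :: "'b::zero opr \<Rightarrow> 'b opr" where
  "nonneg_part X i j = (if 0 \<le> j then X i j else 0)"

lemma bounded_support_nonneg_part: "bounded_support M N X \<Longrightarrow> bounded_support M N (nonneg_part X)"
  by (simp add: bounded_support_def nonneg_part_def)

lemma nonneg_part_in_Eset: "bounded_support M N X \<Longrightarrow> nonneg_part X \<in> Eset"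
  unfolding bounded_support_def nonneg_part_def Eset_def mem_Collect_eq
  by (intro exI[of _ M] exI[of _ N]) simp

context commuting_derivations
begin

lemma Hop_eq: "Hop \<rho> i j = (if i = 1 \<and> j = 1 then 1 else 0) + (if i = 0 \<and> j = 0 then \<rho> else 0)"
  by (simp add: Hop_def opadd_def mono_def)

lemma opmul_Hop_left:
  "mul (Hop \<rho>) X p q = X (p - 1) (q - 1) + D (X p (q - 1)) + E (X (p - 1) q) + D (E (X p q)) + \<rho> * X p q"
proof -
  define S where "S = ({(1,1,0,0),(1,1,0,1),(1,1,1,0),(1,1,1,1),(0,0,0,0)} :: (int \<times> int \<times> nat \<times> nat) set)"
  define f where "f = (\<lambda>(i::int, j::int, m::nat, l::nat).
      Hop \<rho> i j * of_int (ibinom i m) * of_int (ibinom j l) * (D^^m) ((E^^l) (X (p - i + int m) (q - j + int l))))"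
  have supp: "t \<in> S" if "f t \<noteq> 0" for t
  proof -
    obtain i j m l where t: "t = (i, j, m, l)" by (cases t)
    then have nz: "Hop \<rho> i j \<noteq> 0" "ibinom i m \<noteq> 0" "ibinom j l \<noteq> 0" using that f_def by auto
    then have "(i = 1 \<and> j = 1) \<or> (i = 0 \<and> j = 0)" by (auto simp: Hop_eq split: if_splits)
    then show ?thesis
    proof
      assume "i = 1 \<and> j = 1"
      with nz have "m = 0 \<or> m = 1" "l = 0 \<or> l = 1" by (auto simp: ibinom_1_left split: if_splits)
      with \<open>i = 1 \<and> j = 1\<close> show ?thesis using t by (auto simp: S_def)
    next
      assume "i = 0 \<and> j = 0"
      with nz have "m = 0" "l = 0" by (auto simp: ibinom_0_left split: if_splits)
      with \<open>i = 0 \<and> j = 0\<close> show ?thesis using t by (simp add: S_def)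
    qed
  qed
  have "finite S" by (simp add: S_def)
  moreover have "{t. f t \<noteq> 0} \<subseteq> S" using supp by blast
  ultimately have "mul (Hop \<rho>) X p q = sum f S"
    unfolding opmul_def f_def[symmetric] by (rule Sum_any.expand_superset)
  also have "\<dots> = f (1,1,0,0) + (f (1,1,0,1) + (f (1,1,1,0) + (f (1,1,1,1) + f (0,0,0,0))))"
    by (simp add: S_def)
  finally show ?thesis by (simp add: f_def Hop_eq ibinom_1_left algebra_simps)
qed

lemma opmul_mono_0_left:
  "mul (mono 0 (int k)) X p q = (\<Sum>l\<le>k. of_nat (k choose l) * (E^^l) (X p (q - int k + int l)))"
proof -
  define f where "f = (\<lambda>(i::int, j::int, m::nat, l::nat).
      mono 0 (int k) i j * of_int (ibinom i m) * of_int (ibinom j l) * (D^^m) ((E^^l) (X (p - i + int m) (q - j + int l))))"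
  define g where "g l = (0::int, int k, 0::nat, l)" for l :: nat
  have "t \<in> g ` {..k}" if "f t \<noteq> 0" for t
  proof -
    obtain i j m l where t: "t = (i, j, m, l)" by (cases t)
    then have "mono 0 (int k) i j \<noteq> (0::'b)" "ibinom i m \<noteq> 0" "ibinom j l \<noteq> 0" using that f_def by auto
    then have "i = 0" "j = int k" "m = 0" "l \<le> k"
      by (auto simp: mono_def ibinom_0_left ibinom_of_nat binomial_eq_0_iff split: if_splits)
    then show ?thesis using t g_def by auto
  qed
  then have "mul (mono 0 (int k)) X p q = sum f (g ` {..k})"
    unfolding opmul_def f_def[symmetric] by (intro Sum_any.expand_superset) auto
  also have "\<dots> = sum (f \<circ> g) {..k}" by (rule sum.reindex) (auto simp: inj_on_def g_def)
  finally show ?thesis by (simp add: f_def g_def mono_def ibinom_of_nat)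
qed

lemma opmul_mono_0_neg_left:
  assumes W: "\<And>p q. q \<noteq> 0 \<Longrightarrow> W p q = 0"
  shows "mul (mono 0 (- int j)) W p q = (if q + int j \<le> 0 then
     of_int (ibinom (- int j) (nat (- q - int j))) * (E^^nat (- q - int j)) (W p 0) else 0)"
proof -
  define f where "f = (\<lambda>(i::int, j'::int, m::nat, l::nat).
      mono 0 (- int j) i j' * of_int (ibinom i m) * of_int (ibinom j' l) *
      (D^^m) ((E^^l) (W (p - i + int m) (q - j' + int l))))"
  have supp: "t \<in> {(0, - int j, 0, nat (- q - int j))}" if "f t \<noteq> 0" for t
  proof -
    obtain i j' m l where t: "t = (i, j', m, l)" by (cases t)
    then have nz: "mono 0 (- int j) i j' \<noteq> (0::'b)" "ibinom i m \<noteq> 0"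
      "(D^^m) ((E^^l) (W (p - i + int m) (q - j' + int l))) \<noteq> 0"
      using that f_def by auto
    then have "i = 0" "j' = - int j" "m = 0" by (auto simp: mono_def ibinom_0_left split: if_splits)
    moreover have "q - j' + int l = 0"
      using nz(3) W by (metis funpow_derivation_0[OF derivation_D] funpow_derivation_0[OF derivation_E])
    ultimately show ?thesis using t by auto
  qed
  have "mul (mono 0 (- int j)) W p q = sum f {(0, - int j, 0, nat (- q - int j))}"
    unfolding opmul_def f_def[symmetric] by (rule Sum_any.expand_superset) (use supp in auto)
  also have "\<dots> = of_int (ibinom (- int j) (nat (- q - int j)))
      * (E^^nat (- q - int j)) (W p (q + int j + int (nat (- q - int j))))"
    by (simp add: f_def mono_def)
  finally show ?thesis
    using W[of "q + int j" p] by (auto simp: funpow_derivation_0[OF derivation_E])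
qed

lemma funpow_D_E_indicator:
  assumes "(D^^m) ((E^^l) (if P then 1 else 0)) \<noteq> 0"
  shows "P \<and> m = 0 \<and> l = 0"
proof -
  have P: P and nz: "(D^^m) ((E^^l) 1) \<noteq> 0"
    using assms by (auto simp: funpow_derivation_0[OF derivation_D] funpow_derivation_0[OF derivation_E] split: if_splits)
  then have "l = 0"
    using funpow_derivation_1[OF derivation_E, of l] funpow_derivation_0[OF derivation_D] by fastforce
  with nz P show ?thesis using funpow_derivation_1[OF derivation_D, of m] by fastforce
qed

lemma opmul_mono_right: "mul Z (mono i j) p q = Z (p - i) (q - j)"
proof -
  define f where "f = (\<lambda>(i'::int, j'::int, m::nat, l::nat).
      Z i' j' * of_int (ibinom i' m) * of_int (ibinom j' l) *
      (D^^m) ((E^^l) (if p - i' + int m = i \<and> q - j' + int l = j then 1 else 0)))"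
  have "t \<in> {(p - i, q - j, 0, 0)}" if "f t \<noteq> 0" for t
  proof -
    obtain i' j' m l where t: "t = (i', j', m, l)" by (cases t)
    then have "(D^^m) ((E^^l) (if p - i' + int m = i \<and> q - j' + int l = j then 1 else 0)) \<noteq> 0"
      using that f_def by auto
    then show ?thesis using t by (auto dest!: funpow_D_E_indicator)
  qed
  then have "mul Z (mono i j) p q = sum f {(p - i, q - j, 0, 0)}"
    unfolding opmul_def f_def mono_def by (intro Sum_any.expand_superset) auto
  then show ?thesis by (simp add: f_def)
qed

lemma opmul_Hop_right:
  assumes Z: "bounded_support M N Z" and B: "nat (N - q + 1) \<le> B"
  shows "mul Z (Hop \<rho>) p q = Z (p - 1) (q - 1)
    + (\<Sum>l<B. of_int (ibinom (q + int l) l) * rmult (\<lambda>i. Z i (q + int l)) ((E^^l) \<rho>) p)"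
proof -
  define B1 where "B1 = nat (M - p + 1)"
  define f1 where "f1 = (\<lambda>(i::int, j::int, m::nat, l::nat).
      Z i j * of_int (ibinom i m) * of_int (ibinom j l) *
      (D^^m) ((E^^l) (if p - i + int m = 1 \<and> q - j + int l = 1 then 1 else 0)))"
  define f2 where "f2 = (\<lambda>(i::int, j::int, m::nat, l::nat).
      Z i j * of_int (ibinom i m) * of_int (ibinom j l) *
      (D^^m) ((E^^l) (if p - i + int m = 0 \<and> q - j + int l = 0 then \<rho> else 0)))"
  define g where "g = (\<lambda>(l::nat, m::nat). (p + int m, q + int l, m, l))"
  have split: "mul Z (Hop \<rho>) p q = Sum_any (\<lambda>t. f1 t + f2 t)"
    unfolding opmul_def f1_def f2_def Hop_eq
    by (rule Sum_any.cong)
      (auto simp: funpow_derivation_add[OF derivation_D] funpow_derivation_add[OF derivation_E] distrib_left)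
  have supp1: "t \<in> {(p - 1, q - 1, 0, 0)}" if "f1 t \<noteq> 0" for t
  proof -
    obtain i j m l where t: "t = (i, j, m, l)" by (cases t)
    then have "(D^^m) ((E^^l) (if p - i + int m = 1 \<and> q - j + int l = 1 then 1 else 0)) \<noteq> 0"
      using that f1_def by auto
    then show ?thesis using t by (auto dest!: funpow_D_E_indicator)
  qed
  have supp2: "t \<in> g ` ({..<B} \<times> {..<B1})" if "f2 t \<noteq> 0" for t
  proof -
    obtain i j m l where t: "t = (i, j, m, l)" by (cases t)
    then have nz: "(D^^m) ((E^^l) (if p - i + int m = 0 \<and> q - j + int l = 0 then \<rho> else 0)) \<noteq> 0" "Z i j \<noteq> 0"
      using that f2_def by auto
    then have c: "p - i + int m = 0" "q - j + int l = 0"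
      by (auto simp: funpow_derivation_0[OF derivation_D] funpow_derivation_0[OF derivation_E] split: if_splits)
    moreover have "i \<le> M" "j \<le> N" using Z nz(2) by (auto simp: bounded_support_def)
    ultimately have "l < B" "m < B1" using B by (auto simp: B1_def)
    moreover have "t = g (l, m)" using t c by (auto simp: g_def)
    ultimately show ?thesis by auto
  qed
  have fin1: "finite {t. f1 t \<noteq> 0}" by (rule finite_subset[of _ "{(p - 1, q - 1, 0, 0)}"]) (use supp1 in auto)
  have fin2: "finite {t. f2 t \<noteq> 0}" by (rule finite_subset[of _ "g ` ({..<B} \<times> {..<B1})"]) (use supp2 in auto)
  have "Sum_any f1 = sum f1 {(p - 1, q - 1, 0, 0)}"
    by (rule Sum_any.expand_superset) (use supp1 in auto)
  also have "\<dots> = Z (p - 1) (q - 1)" by (simp add: f1_def)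
  finally have sum1: "Sum_any f1 = Z (p - 1) (q - 1)" .
  have "Sum_any f2 = sum f2 (g ` ({..<B} \<times> {..<B1}))"
    by (rule Sum_any.expand_superset) (use supp2 in auto)
  also have "\<dots> = (\<Sum>l<B. \<Sum>m<B1. f2 (g (l, m)))"
    by (subst sum.reindex) (auto simp: inj_on_def g_def sum.cartesian_product split_def)
  also have "\<dots> = (\<Sum>l<B. of_int (ibinom (q + int l) l) * rmult (\<lambda>i. Z i (q + int l)) ((E^^l) \<rho>) p)"
  proof (rule sum.cong[OF refl])
    fix l
    show "(\<Sum>m<B1. f2 (g (l, m))) = of_int (ibinom (q + int l) l) * rmult (\<lambda>i. Z i (q + int l)) ((E^^l) \<rho>) p"
      unfolding rmult_eq_sum[OF vanishes_above_column[OF Z] order.refl] B1_def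
      by (simp add: f2_def g_def sum_distrib_left algebra_simps)
  qed
  finally show ?thesis unfolding split Sum_any.distrib[OF fin1 fin2] sum1 by simp
qed

lemma opmul_diff_Hop:
  assumes Z1: "bounded_support M N Z1" and Z2: "bounded_support M N Z2"
  shows "mul (\<lambda>i j. Z1 i j - Z2 i j) (Hop \<rho>) p q = mul Z1 (Hop \<rho>) p q - mul Z2 (Hop \<rho>) p q"
proof -
  have "bounded_support M N (\<lambda>i j. Z1 i j - Z2 i j)"
    using Z1 Z2 unfolding bounded_support_def by (metis diff_self)
  then have "mul (\<lambda>i j. Z1 i j - Z2 i j) (Hop \<rho>) p q = (Z1 (p - 1) (q - 1) - Z2 (p - 1) (q - 1))
    + (\<Sum>l<nat (N - q + 1). of_int (ibinom (q + int l) l) *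
        rmult (\<lambda>i. Z1 i (q + int l) - Z2 i (q + int l)) ((E^^l) \<rho>) p)"
    by (rule opmul_Hop_right) simp
  then show ?thesis
    unfolding opmul_Hop_right[OF Z1 order.refl] opmul_Hop_right[OF Z2 order.refl]
      rmult_diff[OF vanishes_above_column[OF Z1] vanishes_above_column[OF Z2]]
    by (simp add: algebra_simps sum_subtractf)
qed

lemma opmul_Hop_top_column:
  assumes W: "bounded_support M N W" and top: "\<And>i j'. j < j' \<Longrightarrow> W i j' = 0"
  shows "mul W (Hop \<rho>) (p + 1) (j + 1) = W p j"
  using top by (simp add: opmul_Hop_right[OF W order.refl] rmult_zero)

lemma Hop_right_injective:
  assumes W: "bounded_support M N W" and nonneg: "\<And>i j. W i j \<noteq> 0 \<Longrightarrow> 0 \<le> j"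
    and WH: "\<And>p q. 0 < q \<Longrightarrow> mul W (Hop \<rho>) p q = 0"
  shows "W i j = 0"
proof (rule ccontr)
  assume "W i j \<noteq> 0"
  define J where "J = {j. \<exists>i. W i j \<noteq> 0}"
  have "finite J"
    by (rule finite_subset[of _ "{0..N}"]) (use W nonneg in \<open>auto simp: J_def bounded_support_def\<close>)
  moreover have "j \<in> J" using \<open>W i j \<noteq> 0\<close> by (auto simp: J_def)
  ultimately have "Max J \<in> J" by (intro Max_in) auto
  then obtain i' where i': "W i' (Max J) \<noteq> 0" unfolding J_def by blast
  have above: "W i j' = 0" if "Max J < j'" for i j'
    using Max_ge[OF \<open>finite J\<close>, of j'] that unfolding J_def by force
  have "0 < Max J + 1" using nonneg[OF i'] by simp
  moreover have "mul W (Hop \<rho>) (i' + 1) (Max J + 1) = W i' (Max J)"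
    by (rule opmul_Hop_top_column[OF W]) (rule above)
  ultimately show False using WH i' by simp
qed

lemma Eset_Hop_right_cancel:
  assumes Z: "Z \<in> Eset" and Z': "Z' \<in> Eset"
    and ZH: "\<And>p q. 0 < q \<Longrightarrow> mul Z (Hop \<rho>) p q = mul Z' (Hop \<rho>) p q"
  shows "Z = Z'"
proof -
  obtain M N M' N' where "bounded_support M N Z" "bounded_support M' N' Z'"
    using Eset_bounded_support Z Z' by metis
  then have bs: "bounded_support (max M M') (max N N') Z" "bounded_support (max M M') (max N N') Z'"
    by (fastforce simp: bounded_support_def)+
  have "Z i j - Z' i j = 0" for i j
  proof (rule Hop_right_injective)
    show "bounded_support (max M M') (max N N') (\<lambda>i j. Z i j - Z' i j)"
      using bs unfolding bounded_support_def by (metis diff_self)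
    show "\<And>i j. Z i j - Z' i j \<noteq> 0 \<Longrightarrow> 0 \<le> j"
      using Eset_nonneg[OF Z] Eset_nonneg[OF Z'] by (metis diff_self)
    show "\<And>p q. 0 < q \<Longrightarrow> mul (\<lambda>i j. Z i j - Z' i j) (Hop \<rho>) p q = 0"
      by (simp add: opmul_diff_Hop[OF bs] ZH)
  qed
  then show "Z = Z'" by (intro ext) simp
qed

lemma proj_eqI:
  assumes Y: "Y \<in> E0set" and Z: "Z \<in> Eset" and XYZ: "opsub X Y = mul Z (Hop \<rho>)"
  shows "proj a d1 d2 \<rho> X = Y"
  unfolding proj_def
proof (rule the_equality)
  show "Y \<in> E0set \<and> (\<exists>Z\<in>Eset. opsub X Y = mul Z (Hop \<rho>))" using Y Z XYZ by blast
next
  fix Y' assume "Y' \<in> E0set \<and> (\<exists>Z\<in>Eset. opsub X Y' = mul Z (Hop \<rho>))"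
  then obtain Z' where Y': "Y' \<in> E0set" and Z': "Z' \<in> Eset" and XYZ': "opsub X Y' = mul Z' (Hop \<rho>)"
    by blast
  have XYZ_pq: "X p q - Y p q = mul Z (Hop \<rho>) p q" "X p q - Y' p q = mul Z' (Hop \<rho>) p q" for p q
    using XYZ XYZ' by (simp_all add: opsub_def fun_eq_iff)
  have "0 < q \<Longrightarrow> mul Z' (Hop \<rho>) p q = mul Z (Hop \<rho>) p q" for p q
    using Y Y' XYZ_pq[of p q] by (simp add: E0set_def)
  then have "Z' = Z" by (rule Eset_Hop_right_cancel[OF Z' Z])
  then have "Y' p q = Y p q" for p q
    using XYZ_pq[of p q] by (metis diff_left_imp_eq)
  then show "Y' = Y" by (intro ext)
qed

lemma opmul_nonneg_part_Hop:
  assumes X: "bounded_support M N X"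
  shows "mul (nonneg_part X) (Hop \<rho>) p q =
    (if 0 \<le> q then mul X (Hop \<rho>) p q - (if q = 0 then X (p - 1) (-1) else 0) else 0)"
proof -
  define S where "S Y = (\<Sum>l<nat (N - q + 1). of_int (ibinom (q + int l) l) * rmult (\<lambda>i. Y i (q + int l)) ((E^^l) \<rho>) p)"
    for Y :: "'b opr"
  have XH: "mul X (Hop \<rho>) p q = X (p - 1) (q - 1) + S X"
    unfolding S_def by (rule opmul_Hop_right[OF X order.refl])
  have X'H: "mul (nonneg_part X) (Hop \<rho>) p q = nonneg_part X (p - 1) (q - 1) + S (nonneg_part X)"
    unfolding S_def by (rule opmul_Hop_right[OF bounded_support_nonneg_part[OF X] order.refl])
  show ?thesis
  proof (cases "0 \<le> q")
    case True
    then have "S (nonneg_part X) = S X" by (simp add: S_def nonneg_part_def)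
    with True show ?thesis unfolding XH X'H by (simp add: nonneg_part_def)
  next
    case False
    have "of_int (ibinom (q + int l) l) * rmult (\<lambda>i. nonneg_part X i (q + int l)) ((E^^l) \<rho>) p = 0" for l
    proof (cases "q + int l < 0")
      case True
      then have "(\<lambda>i. nonneg_part X i (q + int l)) = (\<lambda>_. 0)" by (auto simp: nonneg_part_def)
      then show ?thesis by (simp add: rmult_zero)
    next
      case c: False
      then have "ibinom (q + int l) l = 0" using False by (intro ibinom_eq_0) auto
      then show ?thesis by simp
    qed
    then have "S (nonneg_part X) = 0" by (simp add: S_def)
    with False show ?thesis unfolding X'H by (simp add: nonneg_part_def)
  qed
qed

definition E_mult :: "'b opr \<Rightarrow> 'b opr" where
  "E_mult X p q = X p (q - 1) + E (X p q)"

lemma funpow_E_mult: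
  "(E_mult ^^ k) X p q = (\<Sum>l\<le>k. of_nat (k choose l) * (E^^l) (X p (q - int k + int l)))"
proof (induction k arbitrary: q)
  case 0
  then show ?case by simp
next
  case (Suc k)
  define f where "f l = (E^^l) (X p (q - 1 - int k + int l))" for l
  have "(\<Sum>l\<le>Suc k. of_nat (Suc k choose l) * (E^^l) (X p (q - int (Suc k) + int l)))
      = f 0 + (\<Sum>i\<le>k. of_nat (k choose i) * f (Suc i)) + (\<Sum>i\<le>k. of_nat (k choose Suc i) * f (Suc i))"
    unfolding sum.atMost_Suc_shift f_def by (simp add: sum.distrib algebra_simps)
  moreover have "(E_mult ^^ k) X p (q - 1) = f 0 + (\<Sum>i\<le>k. of_nat (k choose Suc i) * f (Suc i))"
  proof -
    have "(E_mult ^^ k) X p (q - 1) = (\<Sum>l\<le>Suc k. of_nat (k choose l) * f l)"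
      unfolding Suc.IH f_def by (simp add: binomial_eq_0)
    then show ?thesis unfolding sum.atMost_Suc_shift by simp
  qed
  moreover have "E ((E_mult ^^ k) X p q) = (\<Sum>i\<le>k. of_nat (k choose i) * f (Suc i))"
    unfolding Suc.IH f_def derivation_sum[OF derivation_E]
    by (rule sum.cong[OF refl])
      (simp add: derivation_mult[OF derivation_E] derivation_of_nat[OF derivation_E] algebra_simps)
  moreover have "(E_mult ^^ Suc k) X p q = (E_mult ^^ k) X p (q - 1) + E ((E_mult ^^ k) X p q)"
    by (simp only: funpow.simps comp_apply E_mult_def)
  ultimately show ?case by (simp add: algebra_simps)
qed

lemma opmul_mono_0_left_eq_E_mult: "mul (mono 0 (int k)) X = (E_mult ^^ k) X"
  by (intro ext) (simp add: opmul_mono_0_left funpow_E_mult)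

lemma E_mult_mono_0: "E_mult (mono 0 j) = mono 0 (1 + j)"
  by (intro ext) (simp add: E_mult_def mono_def derivation_0[OF derivation_E] derivation_1[OF derivation_E])

lemma bounded_support_E_mult:
  assumes X: "bounded_support M N X"
  shows "bounded_support M (N + 1) (E_mult X)"
proof (unfold bounded_support_def, intro allI impI)
  fix i j assume "E_mult X i j \<noteq> 0"
  then have "X i (j - 1) \<noteq> 0 \<or> X i j \<noteq> 0" by (auto simp: E_mult_def derivation_0[OF derivation_E])
  then show "i \<le> M \<and> j \<le> N + 1" using X unfolding bounded_support_def by fastforce
qed

lemma rmult_E_mult_column:
  assumes X: "bounded_support M N X"
  shows "rmult (\<lambda>i. E_mult X i j) r p = rmult (\<lambda>i. X i (j - 1)) r p + E (rmult (\<lambda>i. X i j) r p) - rmult (\<lambda>i. X i j) (E r) p"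
proof -
  have col: "vanishes_above M (\<lambda>i. X i j)" for j by (rule vanishes_above_column[OF X])
  show ?thesis
    unfolding E_mult_def E_rmult[OF col] rmult_add[OF col vanishes_above_E[OF col, of 1], simplified]
    by simp
qed

lemma opmul_E_mult_Hop:
  assumes X: "bounded_support M N X"
  shows "mul (E_mult X) (Hop \<rho>) p s = E_mult (mul X (Hop \<rho>)) p s"
proof -
  define B where "B = nat (N + 1 - s)"
  define c where "c l = (of_int (ibinom (s + int l) l) :: 'b)" for l
  define a where "a l = rmult (\<lambda>i. X i (s - 1 + int l)) ((E^^l) \<rho>) p" for l
  define e where "e l = E (rmult (\<lambda>i. X i (s + int l)) ((E^^l) \<rho>) p)" for l
  have XH: "mul X (Hop \<rho>) p s = X (p - 1) (s - 1)
      + (\<Sum>l<Suc B. c l * rmult (\<lambda>i. X i (s + int l)) ((E^^l) \<rho>) p)"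
    unfolding c_def by (rule opmul_Hop_right[OF X]) (simp add: B_def)
  have "mul X (Hop \<rho>) p (s - 1) = X (p - 1) (s - 1 - 1)
      + (\<Sum>l<Suc B. of_int (ibinom (s - 1 + int l) l) * rmult (\<lambda>i. X i (s - 1 + int l)) ((E^^l) \<rho>) p)"
    by (rule opmul_Hop_right[OF X]) (simp add: B_def)
  also have "(\<Sum>l<Suc B. of_int (ibinom (s - 1 + int l) l) * rmult (\<lambda>i. X i (s - 1 + int l)) ((E^^l) \<rho>) p)
      = (\<Sum>l<Suc B. c l * a l) - (\<Sum>l<Suc B. c l * a (Suc l))"
  proof -
    have "(\<lambda>i. X i (s - 1 + int (Suc B))) = (\<lambda>_. 0)"
      using X by (fastforce simp: B_def bounded_support_def)
    then have "a (Suc B) = 0" by (simp add: a_def rmult_zero)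
    then show ?thesis unfolding a_def[symmetric] sum_ibinom_shift c_def by simp
  qed
  finally have XH': "mul X (Hop \<rho>) p (s - 1) = X (p - 1) (s - 1 - 1)
      + ((\<Sum>l<Suc B. c l * a l) - (\<Sum>l<Suc B. c l * a (Suc l)))" .
  have T: "rmult (\<lambda>i. E_mult X i (s + int l)) ((E^^l) \<rho>) p = a l + e l - a (Suc l)" for l
    using rmult_E_mult_column[OF X] by (simp add: a_def e_def algebra_simps)
  have "mul (E_mult X) (Hop \<rho>) p s = E_mult X (p - 1) (s - 1)
      + (\<Sum>l<Suc B. c l * rmult (\<lambda>i. E_mult X i (s + int l)) ((E^^l) \<rho>) p)"
    unfolding c_def by (rule opmul_Hop_right[OF bounded_support_E_mult[OF X]]) (simp add: B_def)
  then have EXH: "mul (E_mult X) (Hop \<rho>) p s = E_mult X (p - 1) (s - 1)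
      + (\<Sum>l<Suc B. c l * (a l + e l - a (Suc l)))"
    by (simp only: T)
  have "E (mul X (Hop \<rho>) p s) = E (X (p - 1) (s - 1)) + (\<Sum>l<Suc B. c l * e l)"
    unfolding XH c_def e_def derivation_add[OF derivation_E] derivation_sum[OF derivation_E]
    by (simp add: derivation_of_int_mult[OF derivation_E])
  then show ?thesis
    unfolding EXH E_mult_def[of _ p s] E_mult_def[of X] XH'
    by (simp add: algebra_simps sum.distrib sum_subtractf del: sum.lessThan_Suc)
qed

end

section \<open>The inverse of \<open>H\<close>\<close>

locale K_operator = commuting_derivations a d1 d2
  for a :: nat and d1 d2 :: "'b::comm_ring_1 \<Rightarrow> 'b" +
  fixes \<rho> :: 'b and V :: "nat \<Rightarrow> 'b opr"
  assumes V_E0set: "\<And>j. 1 \<le> j \<Longrightarrow> V j \<in> E0set"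
    and H_K: "mul (Hop \<rho>) (Kop a d1 d2 V) = mono 0 1"
begin

abbreviation K :: "'b opr" where "K \<equiv> Kop a d1 d2 V"

lemma V_column: "1 \<le> j \<Longrightarrow> q \<noteq> 0 \<Longrightarrow> V j p q = 0"
  using V_E0set by (auto simp: E0set_def)

lemma V_vanishes_above: "\<exists>M. \<forall>j\<in>{1..n}. vanishes_above M (\<lambda>p. V j p 0)"
proof (induction n)
  case 0
  then show ?case by simp
next
  case (Suc n)
  then obtain M where M: "\<forall>j\<in>{1..n}. vanishes_above M (\<lambda>p. V j p 0)" by blast
  obtain M' N' where "\<forall>i j. V (Suc n) i j \<noteq> 0 \<longrightarrow> i \<le> M' \<and> 0 \<le> j \<and> j \<le> N'"
    using V_E0set[of "Suc n"] by (auto simp: E0set_def Eset_def)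
  then have "vanishes_above M' (\<lambda>p. V (Suc n) p 0)" by (auto simp: vanishes_above_def not_le[symmetric])
  with M have "\<forall>j\<in>{1..Suc n}. vanishes_above (max M M') (\<lambda>p. V j p 0)"
    by (auto simp: le_Suc_eq vanishes_above_def)
  then show ?case by blast
qed

lemma K_eq: "K p q = (if p = -1 \<and> q = 0 then 1 else 0) +
  (\<Sum>j\<in>{1..nat (-q)}. of_int (ibinom (- int j) (nat (-q) - j)) * (E^^(nat (-q) - j)) (V j p 0))"
proof -
  define g where "g j = (if 1 \<le> j then mul (mono 0 (- int j)) (V j) p q else 0)" for j
  have g: "g j = (if 1 \<le> j \<and> q + int j \<le> 0 then
     of_int (ibinom (- int j) (nat (- q - int j))) * (E^^nat (- q - int j)) (V j p 0) else 0)" for j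
    unfolding g_def using opmul_mono_0_neg_left[of "V j" j p q] V_column[of j] by auto
  have "Sum_any g = sum g {1..nat (-q)}"
    by (rule Sum_any.expand_superset) (auto simp: g split: if_splits)
  also have "\<dots> = (\<Sum>j\<in>{1..nat (-q)}. of_int (ibinom (- int j) (nat (-q) - j)) * (E^^(nat (-q) - j)) (V j p 0))"
    by (rule sum.cong[OF refl]) (auto simp: g nat_diff_distrib)
  finally show ?thesis unfolding Kop_def g_def mono_def by simp
qed

lemma K_pos: "0 < q \<Longrightarrow> K p q = 0"
  by (simp add: K_eq)

lemma K_column_0: "K p 0 = (if p = -1 then 1 else 0)"
  by (simp add: K_eq)

lemma K_column_vanishes_above: "\<exists>M. vanishes_above M (\<lambda>p. K p q)"
proof -
  obtain M where "\<forall>j\<in>{1..nat (-q)}. vanishes_above M (\<lambda>p. V j p 0)" using V_vanishes_above by blast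
  then have "vanishes_above (max M 0) (\<lambda>p. K p q)"
    unfolding vanishes_above_def K_eq by (auto simp: funpow_derivation_0[OF derivation_E])
  then show ?thesis by blast
qed

lemma K_column_step:
  assumes "q \<le> 0"
  shows "K p (q - 1) = column_step \<rho> (\<lambda>p. K p q) p"
proof -
  obtain M1 M2 where "vanishes_above M1 (\<lambda>p. K p (q - 1))" "vanishes_above M2 (\<lambda>p. K p q)"
    using K_column_vanishes_above by meson
  then have K1: "vanishes_above (max M1 M2) (\<lambda>p. K p (q - 1))"
    and K2: "vanishes_above (max M1 M2) (\<lambda>p. K p q)"
    by (auto intro: vanishes_above_mono)
  define A where "A = Dinv_mult (\<lambda>p. \<rho> * K p q)"
  have A: "vanishes_above (max M1 M2) A"
    unfolding A_def by (rule vanishes_above_mono[OF vanishes_above_Dinv_mult[OF vanishes_above_mult_left[OF K2]]]) simp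
  have DA: "A (p - 1) + D (A p) = \<rho> * K p q" for p
    using D_mult_Dinv_mult[OF vanishes_above_mult_left[OF K2], of \<rho> p] by (simp add: A_def D_mult_def)
  define Y where "Y = (\<lambda>p. K p (q - 1) + E (K p q) + A p)"
  have DY: "D_mult Y p = 0" for p
  proof -
    have "D_mult Y p = mul (Hop \<rho>) K p q"
      unfolding opmul_Hop_left D_mult_def Y_def DA[symmetric]
      by (simp add: derivation_add[OF derivation_D] D_E_commute algebra_simps)
    also have "\<dots> = 0" using H_K assms by (simp add: mono_def)
    finally show ?thesis .
  qed
  have "vanishes_above (max M1 M2) Y"
    unfolding Y_def using vanishes_above_E[OF K2, of 1] by (intro vanishes_above_add K1 A) simp_all
  then have "Y p = 0" using DY by (rule D_mult_eq_0_imp)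
  then show ?thesis by (simp add: Y_def column_step_def A_def algebra_simps eq_neg_iff_add_eq_0)
qed

lemma K_vanishes_above: "vanishes_above (-1) (\<lambda>p. K p q)"
proof (cases "0 < q")
  case True
  then show ?thesis by (simp add: vanishes_above_def K_pos)
next
  case False
  have "vanishes_above (-1) (\<lambda>p. K p (- int n))" for n
  proof (induction n)
    case 0
    then show ?case by (simp add: vanishes_above_def K_column_0)
  next
    case (Suc n)
    have "- int (Suc n) = - int n - 1" by simp
    then have "(\<lambda>p. K p (- int (Suc n))) = column_step \<rho> (\<lambda>p. K p (- int n))"
      by (simp only:) (intro ext K_column_step, simp)
    then show ?case using vanishes_above_column_step[OF Suc.IH] by simp
  qed
  from this[of "nat (- q)"] False show ?thesis by simp
qed

lemma bounded_support_K: "bounded_support (-1) 0 K"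
  using K_vanishes_above K_pos unfolding bounded_support_def vanishes_above_def by (meson not_le)

text \<open>\<open>H\<^sup>-\<^sup>1 = K E\<^sup>-\<^sup>1\<close>, a right inverse of \<open>H\<close> by \<open>H K = E\<close>.\<close>

definition Hinv :: "'b opr" where
  "Hinv p q = K p (q + 1)"

lemma bounded_support_Hinv: "bounded_support (-1) (-1) Hinv"
proof (unfold bounded_support_def Hinv_def, intro allI impI)
  fix i j assume "K i (j + 1) \<noteq> 0"
  then have "i \<le> -1 \<and> j + 1 \<le> 0" using bounded_support_K unfolding bounded_support_def by blast
  then show "i \<le> -1 \<and> j \<le> -1" by simp
qed

lemma opmul_Hinv_Hop:
  assumes "nat (- s) \<le> B"
  shows "mul Hinv (Hop \<rho>) p s = K (p - 1) s
    + (\<Sum>l<B. of_int (ibinom (s + int l) l) * rmult (\<lambda>i. K i (s + int l + 1)) ((E^^l) \<rho>) p)"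
  using opmul_Hop_right[OF bounded_support_Hinv, of s B \<rho> p] assms by (simp add: Hinv_def)

lemma opmul_Hinv_Hop_column_nonneg: "0 \<le> s \<Longrightarrow> mul Hinv (Hop \<rho>) p s = (if s = 0 \<and> p = 0 then 1 else 0)"
  using opmul_Hinv_Hop[of s 0 p] by (cases "s = 0") (auto simp: K_column_0 K_pos)

lemma opmul_Hinv_Hop_column_minus_1: "mul Hinv (Hop \<rho>) p (-1) = 0"
proof -
  have "mul Hinv (Hop \<rho>) p (-1) = K (p - 1) (-1) + rmult (\<lambda>i. K i 0) \<rho> p"
    using opmul_Hinv_Hop[of "-1" 1 p] by simp
  also have "K (p - 1) (-1) = - Dinv_mult (\<lambda>i. \<rho> * K i 0) (p - 1)"
    using K_column_step[of 0 "p - 1"]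
    by (simp add: column_step_def K_column_0 derivation_0[OF derivation_E] derivation_1[OF derivation_E])
  also have "Dinv_mult (\<lambda>i. \<rho> * K i 0) (p - 1) = rmult (\<lambda>i. K i 0) \<rho> p"
    unfolding Dinv_mult_def rmult_def
    by (rule Sum_any.cong) (auto simp: K_column_0 ibinom_minus_1_left funpow_derivation_0[OF derivation_D])
  finally show ?thesis by simp
qed

lemma column_step_rmult_K_column:
  assumes "q \<le> 0"
  shows "column_step \<rho> (rmult (\<lambda>i. K i q) r) p = rmult (\<lambda>i. K i (q - 1)) r p - rmult (\<lambda>i. K i q) (E r) p"
proof -
  have "column_step \<rho> (\<lambda>i. K i q) = (\<lambda>i. K i (q - 1))"
    using K_column_step[OF assms] by auto
  then show ?thesis
    using column_step_rmult[OF vanishes_above_mono[OF K_vanishes_above, of 0]] by simp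
qed

lemma opmul_Hinv_Hop_column_step:
  assumes s: "s \<le> -1"
  shows "mul Hinv (Hop \<rho>) p (s - 1) = column_step \<rho> (\<lambda>p. mul Hinv (Hop \<rho>) p s) p"
proof -
  define n where "n = nat (- s)"
  have n: "n \<ge> 1" "s = - int n" using s by (auto simp: n_def)
  define c where "c l = (of_int (ibinom (s + int l) l) :: 'b)" for l
  define a where "a l = rmult (\<lambda>i. K i (s + int l)) ((E^^l) \<rho>)" for l
  define b where "b l = rmult (\<lambda>i. K i (s + int l + 1)) ((E^^l) \<rho>)" for l
  have col: "vanishes_above 0 (\<lambda>i. K i j)" for j
    by (rule vanishes_above_mono[OF K_vanishes_above]) simp
  have "mul Hinv (Hop \<rho>) p (s - 1) = K (p - 1) (s - 1) + (\<Sum>l<Suc n. of_int (ibinom (s - 1 + int l) l) * a l p)"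
    using opmul_Hinv_Hop[of "s - 1" "Suc n" p] by (simp add: a_def n_def)
  also have "(\<Sum>l<Suc n. of_int (ibinom (s - 1 + int l) l) * a l p)
      = (\<Sum>l<n. c l * a l p) - (\<Sum>l<n. c l * a (Suc l) p)"
    unfolding sum_ibinom_shift c_def using n by (simp add: ibinom_0_left)
  finally have lhs: "mul Hinv (Hop \<rho>) p (s - 1) = K (p - 1) (s - 1)
      + ((\<Sum>l<n. c l * a l p) - (\<Sum>l<n. c l * a (Suc l) p))" .
  have rhs: "(\<lambda>p. mul Hinv (Hop \<rho>) p s) = (\<lambda>p. K (p - 1) s + (\<Sum>l<n. c l * b l p))"
    using opmul_Hinv_Hop[of s n] by (simp add: b_def c_def n_def)
  have Ks: "vanishes_above 0 (\<lambda>p. K (p - 1) s)"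
    using K_vanishes_above[of s] by (simp add: vanishes_above_def)
  have cb: "vanishes_above 0 (\<lambda>p. c l * b l p)" for l
    unfolding b_def by (intro vanishes_above_mult_left vanishes_above_rmult col)
  have "column_step \<rho> (\<lambda>p. c l * b l p) p = c l * (a l p - a (Suc l) p)" if "l < n" for l
  proof -
    have "column_step \<rho> (b l) p = a l p - a (Suc l) p"
      using column_step_rmult_K_column[of "s + int l + 1" "(E^^l) \<rho>" p] that n
      by (simp add: a_def b_def add.commute add.left_commute)
    then show ?thesis using column_step_of_int_mult[OF vanishes_above_rmult[OF col]] by (simp add: c_def b_def)
  qed
  moreover have "column_step \<rho> (\<lambda>p. \<Sum>l<n. c l * b l p) p = (\<Sum>l<n. column_step \<rho> (\<lambda>p. c l * b l p) p)"
    by (rule column_step_sum[where M = 0]) (simp_all add: cb)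
  moreover have "column_step \<rho> (\<lambda>p. K (p - 1) s) p = K (p - 1) (s - 1)"
    using column_step_shift[of \<rho> "\<lambda>p. K p s" p] K_column_step[of s "p - 1"] s by simp
  ultimately show ?thesis
    unfolding lhs rhs column_step_add[OF Ks vanishes_above_sum[OF cb]]
    by (simp add: right_diff_distrib sum_subtractf)
qed

lemma Hinv_left_inverse: "mul Hinv (Hop \<rho>) = mono 0 0"
proof (intro ext)
  fix p s
  show "mul Hinv (Hop \<rho>) p s = mono 0 0 p s"
  proof (cases "0 \<le> s")
    case True
    then show ?thesis by (simp add: opmul_Hinv_Hop_column_nonneg mono_def)
  next
    case False
    have "mul Hinv (Hop \<rho>) p (-1 - int n) = 0" for n p
    proof (induction n arbitrary: p)
      case 0
      then show ?case using opmul_Hinv_Hop_column_minus_1 by simp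
    next
      case (Suc n)
      then have "(\<lambda>p. mul Hinv (Hop \<rho>) p (-1 - int n)) = (\<lambda>_. 0)" by auto
      then show ?case
        using opmul_Hinv_Hop_column_step[of "-1 - int n" p] by (simp add: column_step_zero algebra_simps)
    qed
    from this[of p "nat (-1 - s)"] False show ?thesis by (simp add: mono_def)
  qed
qed

lemma bounded_support_E_power_Hinv: "bounded_support (-1) (int k - 1) ((E_mult ^^ k) Hinv)"
  by (induction k) (use bounded_support_Hinv bounded_support_E_mult in fastforce)+

lemma opmul_E_power_Hinv_Hop: "mul ((E_mult ^^ k) Hinv) (Hop \<rho>) = mono 0 (int k)"
proof (induction k)
  case 0
  then show ?case using Hinv_left_inverse by simp
next
  case (Suc k)
  have "mul ((E_mult ^^ Suc k) Hinv) (Hop \<rho>) = E_mult (mul ((E_mult ^^ k) Hinv) (Hop \<rho>))"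
    by (intro ext) (simp add: opmul_E_mult_Hop[OF bounded_support_E_power_Hinv])
  then show ?case by (simp add: Suc.IH E_mult_mono_0)
qed

lemma proj_E_power: "proj a d1 d2 \<rho> (mono 0 (int k)) = mul (coef0 (mul (mono 0 (int k)) K)) (mono 1 0)"
proof -
  define L where "L = (E_mult ^^ k) Hinv"
  have L: "bounded_support (-1) (int k - 1) L"
    unfolding L_def by (rule bounded_support_E_power_Hinv)
  have L_K: "L p (-1) = mul (mono 0 (int k)) K p 0" for p
    by (simp add: L_def opmul_mono_0_left funpow_E_mult Hinv_def)
  define Y :: "'b opr" where "Y p q = (if q = 0 then L (p - 1) (-1) else 0)" for p q
  have "mul (coef0 (mul (mono 0 (int k)) K)) (mono 1 0) = Y"
    by (intro ext) (simp add: opmul_mono_right coef0_def Y_def L_K)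
  moreover have "proj a d1 d2 \<rho> (mono 0 (int k)) = Y"
  proof (rule proj_eqI)
    have "p \<le> 0 \<and> 0 \<le> q \<and> q \<le> 0" if "Y p q \<noteq> 0" for p q
    proof -
      have "q = 0" "L (p - 1) (-1) \<noteq> 0" using that by (auto simp: Y_def split: if_splits)
      moreover from this(2) have "p - 1 \<le> -1" using L unfolding bounded_support_def by blast
      ultimately show ?thesis by simp
    qed
    then have "Y \<in> Eset" unfolding Eset_def by blast
    then show "Y \<in> E0set" unfolding E0set_def by (simp add: Y_def)
    show "nonneg_part L \<in> Eset" by (rule nonneg_part_in_Eset[OF L])
    show "opsub (mono 0 (int k)) Y = mul (nonneg_part L) (Hop \<rho>)"
    proof (intro ext)
      fix p q
      have "mul L (Hop \<rho>) p q = mono 0 (int k) p q" by (simp add: L_def opmul_E_power_Hinv_Hop)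
      then show "opsub (mono 0 (int k)) Y p q = mul (nonneg_part L) (Hop \<rho>) p q"
        by (simp add: opsub_def opmul_nonneg_part_Hop[OF L] Y_def mono_def)
    qed
  qed
  ultimately show ?thesis by simp
qed

lemma funpow_E_K:
  assumes "1 \<le> k" "l \<le> k"
  shows "(E^^l) (K p (int l - int k))
    = (\<Sum>j\<in>{1..k - l}. of_int (ibinom (- int j) (k - l - j)) * (E^^(k - j)) (V j p 0))"
proof -
  have "(E^^l) (if p = -1 \<and> int l - int k = 0 then 1 else 0) = 0"
    using assms by (cases "l = k") (auto simp: funpow_derivation_1[OF derivation_E] funpow_derivation_0[OF derivation_E])
  moreover have "(E^^l) ((E^^(k - l - j)) x) = (E^^(k - j)) x" if "j \<le> k - l" for j x
  proof -
    have "l + (k - l - j) = k - j" using that assms by simp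
    then show ?thesis by (metis funpow_add comp_apply)
  qed
  ultimately show ?thesis using assms
    by (simp add: K_eq funpow_derivation_add[OF derivation_E] funpow_derivation_sum[OF derivation_E]
        funpow_derivation_of_int_mult[OF derivation_E] nat_diff_distrib)
qed

lemma E_power_K_column_0:
  assumes "1 \<le> k"
  shows "(E_mult ^^ k) K p 0 = (\<Sum>j = 1..k. (E^^(k - j)) (V j p 0))"
proof -
  define F where "F l j = of_nat (k choose l) * (of_int (ibinom (- int j) (k - l - j)) * (E^^(k - j)) (V j p 0))"
    for l j
  have "(E_mult ^^ k) K p 0 = (\<Sum>l\<le>k. \<Sum>j\<in>{1..k - l}. F l j)"
    unfolding funpow_E_mult F_def by (simp add: funpow_E_K[OF assms] sum_distrib_left)
  also have "\<dots> = (\<Sum>l\<le>k. \<Sum>j\<in>{j \<in> {1..k}. j \<le> k - l}. F l j)"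
    by (intro sum.cong) auto
  also have "\<dots> = (\<Sum>j = 1..k. \<Sum>l\<in>{l \<in> {..k}. j \<le> k - l}. F l j)"
    by (rule sum.swap_restrict) auto
  also have "\<dots> = (\<Sum>j = 1..k. \<Sum>l = 0..k - j. F l j)"
    by (intro sum.cong) auto
  also have "\<dots> = (\<Sum>j = 1..k. (E^^(k - j)) (V j p 0))"
  proof (rule sum.cong[OF refl])
    fix j assume j: "j \<in> {1..k}"
    have "(\<Sum>l = 0..k - j. F l j) = of_int (\<Sum>l\<le>k - j. int (k choose l) * ibinom (- int j) (k - j - l)) * (E^^(k - j)) (V j p 0)"
      unfolding F_def of_int_sum sum_distrib_right atLeast0AtMost
      by (rule sum.cong[OF refl]) (simp add: algebra_simps)
    also have "(\<Sum>l\<le>k - j. int (k choose l) * ibinom (- int j) (k - j - l)) = 1"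
    proof -
      have "int k + - int j = int (k - j)" using j by simp
      then show ?thesis
        using ibinom_Vandermonde[where n = "k - j" and k = k and i = "- int j"] by (simp only: ibinom_of_nat) simp
    qed
    finally show "(\<Sum>l = 0..k - j. F l j) = (E^^(k - j)) (V j p 0)" by simp
  qed
  finally show ?thesis .
qed

end

theorem mainTheorem11:
  fixes a :: nat and k :: nat
    and d1 d2 :: "'b::comm_ring_1 \<Rightarrow> 'b" and \<rho> :: 'b
    and V :: "nat \<Rightarrow> 'b opr"
  assumes a: "a \<in> {1, 2}"
    and der1: "is_derivation d1" and der2: "is_derivation d2"
    and comm: "\<And>x. d1 (d2 x) = d2 (d1 x)"
    and V0: "\<And>j. 1 \<le> j \<Longrightarrow> V j \<in> E0set"
    and HK: "opmul a d1 d2 (Hop \<rho>) (Kop a d1 d2 V) = mono 0 1"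
    and k: "1 \<le> k"
  shows "proj a d1 d2 \<rho> (mono 0 (int k))
           = opmul a d1 d2 (coef0 (opmul a d1 d2 (mono 0 (int k)) (Kop a d1 d2 V))) (mono 1 0)
       \<and> opmul a d1 d2 (coef0 (opmul a d1 d2 (mono 0 (int k)) (Kop a d1 d2 V))) (mono 1 0)
           = (\<lambda>p q. \<Sum>j = 1..k. opmul a d1 d2 (dcoef a d1 d2 (k - j) (V j)) (mono 1 0) p q)"
proof -
  interpret K_operator a d1 d2 \<rho> V
    by unfold_locales (use der1 der2 comm V0 HK in auto)
  have "coef0 (mul (mono 0 (int k)) K) (p - 1) q = (\<Sum>j = 1..k. dcoef a d1 d2 (k - j) (V j) (p - 1) q)" for p q
    using E_power_K_column_0[OF k]
    by (cases "q = 0") (simp_all add: coef0_def opmul_mono_0_left_eq_E_mult dcoef_def V_column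
        funpow_derivation_0[OF derivation_E])
  then show ?thesis by (simp add: proj_E_power opmul_mono_right fun_eq_iff)
qed

end
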